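(* Let $d_1,d_2,d_3\ge2$ and let $|\varphi\rangle=\sum_{i=1}^{d_1}\sum_{j=1}^{d_2}\sum_{k=1}^{d_3}a_{ijk}|ijk\rangle$ be a normalized pure state in $H_1\otimes H_2\otimes H_3$. Then $$C_3^2(|\varphi\rangle)\ \ge\ \frac{1}{(d_1-1)(d_2-1)(d_3-1)}\sum C_3^2(|\varphi\rangle_{2\otimes2\otimes2}),$$ where the sum runs over all pure substates $|\varphi\rangle_{2\otimes2\otimes2}=\sum_{i\in\{i_1,i_2\}}\sum_{j\in\{j_1,j_2\}}\sum_{k\in\{k_1,k_2\}}a_{ijk}|ijk\rangle$ with $i_1\ne i_2$ in $\{1,\dots,d_1\}$, $j_1\ne j_2$ in $\{1,\dots,d_2\}$, $k_1\ne k_2$ in $\{1,\dots,d_3\}$ (unordered pairs).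
   Context: For a (not necessarily normalized) vector $|\varphi\rangle\in H_1\otimes\cdots\otimes H_N$ with $\sigma=|\varphi\rangle\langle\varphi|$, the $N$-partite concurrence is $C_N(|\varphi\rangle)=2^{1-N/2}\sqrt{(2^N-2)(\mathrm{tr}\,\sigma)^2-\sum_\alpha \mathrm{tr}(\sigma_\alpha^2)}$, where $\alpha$ runs over all $2^N-2$ nonempty proper subsets of $\{1,\dots,N\}$ and $\sigma_\alpha=\mathrm{tr}_{\bar\alpha}\sigma$. Here $N=3$ and the substates are unnormalized vectors in $\mathbb{C}^2\otimes\mathbb{C}^2\otimes\mathbb{C}^2$. *)

theory Defs
  imports Complex_Main
begin

text \<open>A (not necessarily normalized) tripartite vector is given by its coefficients
  a :: nat \<times> nat \<times> nat \<Rightarrow> complex on a finite product index set I = I1 \<times> I2 \<times> I3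
  (the computational basis |ijk> with (i,j,k) in I). Parties are numbered 0,1,2.\<close>

definition mix3 :: "nat set \<Rightarrow> nat \<times> nat \<times> nat \<Rightarrow> nat \<times> nat \<times> nat \<Rightarrow> nat \<times> nat \<times> nat" where
  "mix3 \<alpha> u v = ((if 0 \<in> \<alpha> then fst u else fst v),
                  (if 1 \<in> \<alpha> then fst (snd u) else fst (snd v)),
                  (if 2 \<in> \<alpha> then snd (snd u) else snd (snd v)))"

definition tr_sigma :: "(nat \<times> nat \<times> nat) set \<Rightarrow> (nat \<times> nat \<times> nat \<Rightarrow> complex) \<Rightarrow> real" where
  "tr_sigma I a = (\<Sum>x\<in>I. (cmod (a x))^2)"

text \<open>tr(sigma_alpha^2), sigma_alpha = partial trace over the complement of alpha:
  (sigma_alpha)[x_alpha, y_alpha] = sum over z of a(x_alpha,z) * conj(a(y_alpha,z)).\<close>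
definition tr_red_sq :: "(nat \<times> nat \<times> nat) set \<Rightarrow> (nat \<times> nat \<times> nat \<Rightarrow> complex) \<Rightarrow> nat set \<Rightarrow> real" where
  "tr_red_sq I a \<alpha> = Re (\<Sum>x\<in>I. \<Sum>y\<in>I.
      a x * cnj (a (mix3 \<alpha> y x)) * a y * cnj (a (mix3 \<alpha> x y)))"

definition proper_parts3 :: "nat set set" where
  "proper_parts3 = Pow {0,1,2} - {{}, {0,1,2}}"

text \<open>N-partite concurrence with N = 3:
  C_3 = 2^(1 - 3/2) * sqrt((2^3 - 2) (tr sigma)^2 - sum_alpha tr(sigma_alpha^2)).\<close>
definition C3 :: "(nat \<times> nat \<times> nat) set \<Rightarrow> (nat \<times> nat \<times> nat \<Rightarrow> complex) \<Rightarrow> real" where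
  "C3 I a = 2 powr (1 - 3/2) *
     sqrt ((2^3 - 2) * (tr_sigma I a)^2 - (\<Sum>\<alpha>\<in>proper_parts3. tr_red_sq I a \<alpha>))"

end

theory Submission
  imports Defs
begin

text \<open>Expanding the square, \<open>C\<^sub>3\<^sup>2\<close> is a quarter of the sum, over all bipartitions \<open>\<alpha>\<close> and
  all pairs of basis indices \<open>x, y\<close>, of \<open>|a\<^sub>x a\<^sub>y - a\<^sub>x\<^sub>' a\<^sub>y\<^sub>'|\<^sup>2\<close>, where \<open>x', y'\<close> arise from
  \<open>x, y\<close> by exchanging their \<open>\<alpha>\<close>-coordinates (these are the \<open>2\<times>2\<close> minors of the
  \<open>\<alpha>\<close>-flattening of \<open>a\<close>). All terms are nonnegative, and a fixed pair \<open>x, y\<close> lies in at most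
  \<open>(d\<^sub>1-1)(d\<^sub>2-1)(d\<^sub>3-1)\<close> of the \<open>2\<times>2\<times>2\<close> sub-boxes, since a point of a \<open>d\<close>-element set lies
  in only \<open>d-1\<close> two-element subsets. Hence the same expansion summed over all sub-boxes counts
  every term at most that often.\<close>

lemma mix3_mix3: "mix3 \<alpha> (mix3 \<alpha> x y) (mix3 \<alpha> y x) = x"
  by (cases x; cases y) (auto simp: mix3_def)

lemma mix3_in_times:
  "x \<in> A \<times> B \<times> C \<Longrightarrow> y \<in> A \<times> B \<times> C \<Longrightarrow> mix3 \<alpha> x y \<in> A \<times> B \<times> C"
  by (cases x; cases y) (auto simp: mix3_def)

lemma card_proper_parts3: "card proper_parts3 = 6"
proof -
  have "card (Pow {0,1,2::nat}) = 8" by (simp add: card_Pow)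
  moreover have "{{}, {0,1,2::nat}} \<subseteq> Pow {0,1,2}" by auto
  ultimately show ?thesis unfolding proper_parts3_def by (simp add: card_Diff_subset)
qed

lemma cmod_diff_power2: "(cmod (p - q))^2 = (cmod p)^2 + (cmod q)^2 - 2 * Re (p * cnj q)"
  unfolding cmod_power2 by (simp add: power2_diff algebra_simps)

definition sq_minor :: "(nat \<times> nat \<times> nat \<Rightarrow> complex) \<Rightarrow> nat set \<Rightarrow>
    nat \<times> nat \<times> nat \<Rightarrow> nat \<times> nat \<times> nat \<Rightarrow> real" where
  "sq_minor a \<alpha> x y = (cmod (a x * a y - a (mix3 \<alpha> y x) * a (mix3 \<alpha> x y)))^2"

lemma sum_sq_minor:
  assumes "finite (A \<times> B \<times> C)"
  defines "I \<equiv> A \<times> B \<times> C"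
  shows "(\<Sum>x\<in>I. \<Sum>y\<in>I. sq_minor a \<alpha> x y) = 2 * (tr_sigma I a)^2 - 2 * tr_red_sq I a \<alpha>"
proof -
  let ?m = "mix3 \<alpha>"
  have tr_sq: "(tr_sigma I a)^2 = (\<Sum>(x,y)\<in>I\<times>I. (cmod (a x * a y))^2)"
    unfolding tr_sigma_def power2_eq_square[of "sum _ _"] sum_product sum.cartesian_product
    by (simp add: norm_mult power_mult_distrib)
  \<comment> \<open>\<open>(x, y) \<mapsto> (m y x, m x y)\<close> is an involution of \<open>I \<times> I\<close>.\<close>
  have "(\<Sum>(x,y)\<in>I\<times>I. (cmod (a (?m y x) * a (?m x y)))^2) = (\<Sum>(x,y)\<in>I\<times>I. (cmod (a x * a y))^2)"
    by (rule sum.reindex_bij_witness[where i = "\<lambda>(x,y). (?m y x, ?m x y)"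
          and j = "\<lambda>(x,y). (?m y x, ?m x y)"])
       (auto simp: I_def mix3_in_times mix3_mix3 mult.commute)
  then have swapped_sq: "(\<Sum>x\<in>I. \<Sum>y\<in>I. (cmod (a (?m y x) * a (?m x y)))^2) = (tr_sigma I a)^2"
    by (simp add: tr_sq sum.cartesian_product)
  have red: "tr_red_sq I a \<alpha> = (\<Sum>x\<in>I. \<Sum>y\<in>I. Re ((a x * a y) * cnj (a (?m y x) * a (?m x y))))"
    unfolding tr_red_sq_def Re_sum by (simp add: mult_ac)
  have "(\<Sum>x\<in>I. \<Sum>y\<in>I. sq_minor a \<alpha> x y) = (\<Sum>x\<in>I. \<Sum>y\<in>I. (cmod (a x * a y))^2)
    + (\<Sum>x\<in>I. \<Sum>y\<in>I. (cmod (a (?m y x) * a (?m x y)))^2)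
    - 2 * (\<Sum>x\<in>I. \<Sum>y\<in>I. Re ((a x * a y) * cnj (a (?m y x) * a (?m x y))))"
    unfolding sq_minor_def cmod_diff_power2 sum_subtractf sum.distrib sum_distrib_left by simp
  then show ?thesis using tr_sq swapped_sq red by (simp add: sum.cartesian_product)
qed

lemma C3_power2_eq_sum_sq_minor:
  assumes "finite (A \<times> B \<times> C)"
  defines "I \<equiv> A \<times> B \<times> C"
  shows "(C3 I a)^2 = (\<Sum>x\<in>I. \<Sum>y\<in>I. \<Sum>\<alpha>\<in>proper_parts3. sq_minor a \<alpha> x y) / 4"
proof -
  define E where "E = (2^3 - 2) * (tr_sigma I a)^2 - (\<Sum>\<alpha>\<in>proper_parts3. tr_red_sq I a \<alpha>)"
  have "(\<Sum>x\<in>I. \<Sum>y\<in>I. \<Sum>\<alpha>\<in>proper_parts3. sq_minor a \<alpha> x y)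
      = (\<Sum>\<alpha>\<in>proper_parts3. 2 * (tr_sigma I a)^2 - 2 * tr_red_sq I a \<alpha>)"
    using sum_sq_minor[OF assms(1)] by (simp add: I_def sum.swap[of _ proper_parts3])
  also have "\<dots> = 2 * E"
    unfolding E_def sum_subtractf by (simp add: card_proper_parts3 sum_distrib_left)
  finally have S: "(\<Sum>x\<in>I. \<Sum>y\<in>I. \<Sum>\<alpha>\<in>proper_parts3. sq_minor a \<alpha> x y) = 2 * E" .
  have "0 \<le> (\<Sum>x\<in>I. \<Sum>y\<in>I. \<Sum>\<alpha>\<in>proper_parts3. sq_minor a \<alpha> x y)"
    by (intro sum_nonneg) (simp add: sq_minor_def)
  then have "E \<ge> 0" using S by simp
  moreover have "(2 powr (1 - 3/2::real))^2 = 1/2"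
    by (simp add: powr_minus powr_half_sqrt divide_simps)
  ultimately have "(C3 I a)^2 = E / 2"
    unfolding C3_def E_def by (simp add: power_mult_distrib)
  with S show ?thesis by simp
qed

lemma card_two_subsets_containing_le:
  assumes "finite A" and "u \<in> A"
  shows "card {P. P \<subseteq> A \<and> card P = 2 \<and> u \<in> P \<and> v \<in> P} \<le> card A - 1"
proof -
  have "{P. P \<subseteq> A \<and> card P = 2 \<and> u \<in> P \<and> v \<in> P} \<subseteq> (\<lambda>z. {u, z}) ` (A - {u})"
  proof
    fix P assume P: "P \<in> {P. P \<subseteq> A \<and> card P = 2 \<and> u \<in> P \<and> v \<in> P}"
    then obtain z where "P = {u, z}" "z \<noteq> u"
      by (auto simp: card_2_iff doubleton_eq_iff)
    with P show "P \<in> (\<lambda>z. {u, z}) ` (A - {u})" by auto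
  qed
  then have "card {P. P \<subseteq> A \<and> card P = 2 \<and> u \<in> P \<and> v \<in> P} \<le> card ((\<lambda>z. {u, z}) ` (A - {u}))"
    using assms(1) by (intro card_mono) auto
  also have "\<dots> \<le> card (A - {u})" by (rule card_image_le) (simp add: assms(1))
  finally show ?thesis using assms by simp
qed

lemma sum_over_blocks_le:
  fixes f :: "'a \<Rightarrow> 'a \<Rightarrow> real"
  assumes "finite K" "finite I" "\<And>k. k \<in> K \<Longrightarrow> block k \<subseteq> I"
    and "\<And>x y. x \<in> I \<Longrightarrow> y \<in> I \<Longrightarrow> f x y \<ge> 0"
    and "\<And>x y. x \<in> I \<Longrightarrow> y \<in> I \<Longrightarrow> card {k\<in>K. x \<in> block k \<and> y \<in> block k} \<le> N"
  shows "(\<Sum>k\<in>K. \<Sum>x\<in>block k. \<Sum>y\<in>block k. f x y) \<le> N * (\<Sum>x\<in>I. \<Sum>y\<in>I. f x y)"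
proof -
  have restrict: "(\<Sum>x\<in>block k. \<Sum>y\<in>block k. f x y)
      = (\<Sum>x\<in>I. \<Sum>y\<in>I. if x \<in> block k \<and> y \<in> block k then f x y else 0)" if "k \<in> K" for k
  proof -
    have "(\<Sum>x\<in>block k. \<Sum>y\<in>block k. f x y)
        = (\<Sum>x\<in>I. if x \<in> block k then \<Sum>y\<in>I. if y \<in> block k then f x y else 0 else 0)"
      using assms(2) assms(3)[OF that] by (simp add: sum.inter_restrict[symmetric] Int_absorb1)
    also have "\<dots> = (\<Sum>x\<in>I. \<Sum>y\<in>I. if x \<in> block k \<and> y \<in> block k then f x y else 0)"
      by (rule sum.cong) auto
    finally show ?thesis .
  qed
  have count: "(\<Sum>k\<in>K. if x \<in> block k \<and> y \<in> block k then f x y else 0)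
      = real (card {k\<in>K. x \<in> block k \<and> y \<in> block k}) * f x y" for x y
    using assms(1) by (simp add: sum.If_cases Int_def)
  have "(\<Sum>k\<in>K. \<Sum>x\<in>block k. \<Sum>y\<in>block k. f x y)
      = (\<Sum>k\<in>K. \<Sum>x\<in>I. \<Sum>y\<in>I. if x \<in> block k \<and> y \<in> block k then f x y else 0)"
    by (rule sum.cong[OF refl restrict])
  also have "\<dots> = (\<Sum>x\<in>I. \<Sum>y\<in>I. real (card {k\<in>K. x \<in> block k \<and> y \<in> block k}) * f x y)"
    unfolding count[symmetric] by (subst sum.swap) (simp only: sum.swap[of _ K])
  also have "\<dots> \<le> (\<Sum>x\<in>I. \<Sum>y\<in>I. N * f x y)"
    using assms(4,5) by (intro sum_mono mult_right_mono) auto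
  finally show ?thesis by (simp add: sum_distrib_left)
qed

lemma card_boxes_containing_le:
  assumes "finite A" "finite B" "finite C" and "x \<in> A \<times> B \<times> C"
  shows "card {(P, Q, R) \<in> {P. P \<subseteq> A \<and> card P = 2} \<times> {Q. Q \<subseteq> B \<and> card Q = 2} \<times>
      {R. R \<subseteq> C \<and> card R = 2}. x \<in> P \<times> Q \<times> R \<and> y \<in> P \<times> Q \<times> R}
    \<le> (card A - 1) * (card B - 1) * (card C - 1)"
proof -
  obtain x1 x2 x3 y1 y2 y3 where x: "x = (x1, x2, x3)" and y: "y = (y1, y2, y3)"
    by (cases x; cases y) auto
  have eq: "{(P, Q, R) \<in> {P. P \<subseteq> A \<and> card P = 2} \<times> {Q. Q \<subseteq> B \<and> card Q = 2} \<times>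
      {R. R \<subseteq> C \<and> card R = 2}. x \<in> P \<times> Q \<times> R \<and> y \<in> P \<times> Q \<times> R}
    = {P. P \<subseteq> A \<and> card P = 2 \<and> x1 \<in> P \<and> y1 \<in> P} \<times>
      {Q. Q \<subseteq> B \<and> card Q = 2 \<and> x2 \<in> Q \<and> y2 \<in> Q} \<times>
      {R. R \<subseteq> C \<and> card R = 2 \<and> x3 \<in> R \<and> y3 \<in> R}"
    by (auto simp: x y)
  have "x1 \<in> A" "x2 \<in> B" "x3 \<in> C" using assms(4) by (auto simp: x)
  then show ?thesis
    unfolding eq card_cartesian_product mult.assoc
    by (intro mult_le_mono card_two_subsets_containing_le assms(1-3))
qed

lemma sum_C3_sub_boxes_le:
  assumes "finite A" "finite B" "finite C"
  shows "(\<Sum>P\<in>{P. P \<subseteq> A \<and> card P = 2}. \<Sum>Q\<in>{Q. Q \<subseteq> B \<and> card Q = 2}.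
      \<Sum>R\<in>{R. R \<subseteq> C \<and> card R = 2}. (C3 (P \<times> Q \<times> R) a)^2)
    \<le> real ((card A - 1) * (card B - 1) * (card C - 1)) * (C3 (A \<times> B \<times> C) a)^2"
proof -
  define K where "K = {P. P \<subseteq> A \<and> card P = 2} \<times> {Q. Q \<subseteq> B \<and> card Q = 2} \<times>
    {R. R \<subseteq> C \<and> card R = 2}"
  define box :: "nat set \<times> nat set \<times> nat set \<Rightarrow> (nat \<times> nat \<times> nat) set"
    where "box = (\<lambda>(P, Q, R). P \<times> Q \<times> R)"
  define f where "f x y = (\<Sum>\<alpha>\<in>proper_parts3. sq_minor a \<alpha> x y)" for x y
  have C3_box: "(C3 (box k) a)^2 = (\<Sum>x\<in>box k. \<Sum>y\<in>box k. f x y) / 4" if "k \<in> K" for k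
  proof -
    obtain P Q R where k: "k = (P, Q, R)" by (cases k) auto
    have "finite P" "finite Q" "finite R" using that assms by (auto simp: k K_def intro: finite_subset)
    then show ?thesis by (simp add: f_def k box_def C3_power2_eq_sum_sq_minor)
  qed
  have multiplicity: "card {k\<in>K. x \<in> box k \<and> y \<in> box k} \<le> (card A - 1) * (card B - 1) * (card C - 1)"
    if "x \<in> A \<times> B \<times> C" for x y
  proof -
    have "{k\<in>K. x \<in> box k \<and> y \<in> box k} = {(P, Q, R)\<in>K. x \<in> P \<times> Q \<times> R \<and> y \<in> P \<times> Q \<times> R}"
      by (auto simp: box_def)
    then show ?thesis using card_boxes_containing_le[OF assms that] by (simp add: K_def)
  qed
  have "finite K" unfolding K_def using assms by (auto intro: finite_subset[of _ "Pow _"])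
  have "(\<Sum>P\<in>{P. P \<subseteq> A \<and> card P = 2}. \<Sum>Q\<in>{Q. Q \<subseteq> B \<and> card Q = 2}.
      \<Sum>R\<in>{R. R \<subseteq> C \<and> card R = 2}. (C3 (P \<times> Q \<times> R) a)^2) = (\<Sum>k\<in>K. (C3 (box k) a)^2)"
    unfolding K_def box_def sum.cartesian_product by (intro sum.cong) auto
  also have "\<dots> = (\<Sum>k\<in>K. \<Sum>x\<in>box k. \<Sum>y\<in>box k. f x y) / 4"
    unfolding sum_divide_distrib[of _ K] by (rule sum.cong) (simp_all add: C3_box)
  also have "\<dots> \<le> (card A - 1) * (card B - 1) * (card C - 1)
      * (\<Sum>x\<in>A \<times> B \<times> C. \<Sum>y\<in>A \<times> B \<times> C. f x y) / 4"
    using \<open>finite K\<close> multiplicity assms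
    by (intro divide_right_mono sum_over_blocks_le)
       (auto simp: K_def box_def f_def sq_minor_def intro!: sum_nonneg)
  also have "\<dots> = (card A - 1) * (card B - 1) * (card C - 1) * (C3 (A \<times> B \<times> C) a)^2"
    using assms by (simp add: f_def C3_power2_eq_sum_sq_minor)
  finally show ?thesis by simp
qed

theorem mainTheorem2:
  fixes d1 d2 d3 :: nat and a :: "nat \<times> nat \<times> nat \<Rightarrow> complex"
  assumes "d1 \<ge> 2" and "d2 \<ge> 2" and "d3 \<ge> 2"
    and "tr_sigma ({..<d1} \<times> {..<d2} \<times> {..<d3}) a = 1"
  shows "(C3 ({..<d1} \<times> {..<d2} \<times> {..<d3}) a)^2 \<ge>
    1 / real ((d1 - 1) * (d2 - 1) * (d3 - 1)) *
    (\<Sum>P\<in>{P. P \<subseteq> {..<d1} \<and> card P = 2}. \<Sum>Q\<in>{Q. Q \<subseteq> {..<d2} \<and> card Q = 2}.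
       \<Sum>R\<in>{R. R \<subseteq> {..<d3} \<and> card R = 2}. (C3 (P \<times> Q \<times> R) a)^2)"
proof -
  define N where "N = real ((d1 - 1) * (d2 - 1) * (d3 - 1))"
  have "N > 0" using assms(1-3) by (simp add: N_def)
  moreover have "(\<Sum>P\<in>{P. P \<subseteq> {..<d1} \<and> card P = 2}. \<Sum>Q\<in>{Q. Q \<subseteq> {..<d2} \<and> card Q = 2}.
       \<Sum>R\<in>{R. R \<subseteq> {..<d3} \<and> card R = 2}. (C3 (P \<times> Q \<times> R) a)^2)
    \<le> N * (C3 ({..<d1} \<times> {..<d2} \<times> {..<d3}) a)^2"
    using sum_C3_sub_boxes_le[of "{..<d1}" "{..<d2}" "{..<d3}" a] by (simp add: N_def)
  ultimately show ?thesis unfolding N_def[symmetric] by (simp add: pos_divide_le_eq mult.commute)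
qed

end
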